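(* Consider $N$ agents whose states stack into $x\in\mathbb{R}^n$, each state coordinate belonging to exactly one agent. Let $A\in\mathbb{R}^{n\times n}$, $W\in\mathbb{R}^{n\times n}$ symmetric positive definite, $C=\mathrm{diag}(C_{11},\dots,C_{nn})$ diagonal positive definite (block-diagonal over agents). For each agent $i$ let $\Delta_{\ell_2}y_i>0$ be the $\ell_2$-sensitivity of its output map, take $\delta_i\in[10^{-5},10^{-1}]$, $\epsilon_i>0$, and set $\sigma_i=\frac{\Delta_{\ell_2}y_i}{2\epsilon_i}\big(K_{\delta_i}+\sqrt{K_{\delta_i}^2+2\epsilon_i}\big)$; let $V$ be the diagonal matrix whose $j$-th diagonal entry is $\sigma_i^2$ for the agent $i$ owning coordinate $j$. Let $\Sigma$ be the unique positive semidefinite solution of $\Sigma=A\Sigma A^T-A\Sigma C^T(C\Sigma C^T+V)^{-1}C\Sigma A^T+W$ and $\overline\Sigma=(C^TV^{-1}C+\Sigma^{-1})^{-1}$ (the MSE matrix of the a posteriori estimates). Let $B_l,B_u$ be real numbers and define, for each $i$, $$\eta_3:=\left(\frac{B_lC_u^2}{(\Delta_{\ell_2}y_i)^2\big(n-B_l\lambda_n^{-1}(W)\big)}\right)^{1/2},\qquad \eta_4:=\left(\frac{B_uC_l^2}{n(\Delta_{\ell_2}y_i)^2}\right)^{1/2},$$ assumed to be positive real numbers. If for all $i$ $$\frac18\left(\frac{1+\sqrt{36\eta_4+1}}{\eta_4}\right)^2\le\epsilon_i\le\frac1{\eta_3},$$ then $B_l\le\mathrm{tr}\,\overline\Sigma\le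 B_u$.
   Context: $\mathcal{Q}(y)=\frac{1}{\sqrt{2\pi}}\int_y^\infty e^{-z^2/2}dz$ and $K_\delta=\mathcal{Q}^{-1}(\delta)$. $\lambda_n(\cdot)$ is the smallest eigenvalue. With $V_{jj}=\sigma_j^2$ the noise variance of coordinate $j$, $l=\arg\min_j C_{jj}^2/\sigma_j^2$, $u=\arg\max_j C_{jj}^2/\sigma_j^2$, $C_l=C_{ll}$, $C_u=C_{uu}$. The $\ell_2$-sensitivity of agent $i$'s output $y_i(k)=C_ix_i(k)$ is $\sup\|C_ix_i-C_ix_i'\|_{\ell_2}$ over state trajectories with $\|x_i-x_i'\|_{\ell_2}\le b_i$ for a given adjacency parameter $b_i>0$. *)

theory Defs
  imports "HOL-Analysis.Analysis"
begin

definition Qfun :: "real \<Rightarrow> real" where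
  "Qfun y = (1 / sqrt (2 * pi)) * integral {y..} (\<lambda>z. exp (- (z\<^sup>2) / 2))"

definition Kfun :: "real \<Rightarrow> real" where
  "Kfun \<delta> = (THE y. Qfun y = \<delta>)"

definition sym_mat :: "real^'n^'n \<Rightarrow> bool" where
  "sym_mat M \<longleftrightarrow> transpose M = M"

definition pos_def :: "real^'n^'n \<Rightarrow> bool" where
  "pos_def M \<longleftrightarrow> sym_mat M \<and> (\<forall>x. x \<noteq> 0 \<longrightarrow> x \<bullet> (M *v x) > 0)"

definition pos_semidef :: "real^'n^'n \<Rightarrow> bool" where
  "pos_semidef M \<longleftrightarrow> sym_mat M \<and> (\<forall>x. x \<bullet> (M *v x) \<ge> 0)"

definition diag_mat :: "real^'n^'n \<Rightarrow> bool" where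
  "diag_mat M \<longleftrightarrow> (\<forall>i j. i \<noteq> j \<longrightarrow> M $ i $ j = 0)"

definition min_eig :: "real^'n^'n \<Rightarrow> real" where
  "min_eig M = Min {l. \<exists>v. v \<noteq> 0 \<and> M *v v = l *s v}"

text \<open>l2-sensitivity of the output y_i = C_i x_i of agent i (coordinates owner^-1 {i}),
  with adjacency parameter b: supremum of the l2 norm of C_i x_i - C_i x_i' over state
  trajectories of agent i with l2 distance at most b.\<close>
definition l2_sensitivity :: "real^'n^'n \<Rightarrow> ('n \<Rightarrow> 'm) \<Rightarrow> real \<Rightarrow> 'm \<Rightarrow> real" where
  "l2_sensitivity C owner b i =
     Sup {sqrt (\<Sum>k. \<Sum>j\<in>{j. owner j = i}. (C $ j $ j * (x k j - x' k j))\<^sup>2) | x x'.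
            summable (\<lambda>k. \<Sum>j\<in>{j. owner j = i}. (x k j - x' k j)\<^sup>2) \<and>
            sqrt (\<Sum>k. \<Sum>j\<in>{j. owner j = i}. (x k j - x' k j)\<^sup>2) \<le> b}"

end

theory Submission
  imports Defs
begin

text \<open>
  The Riccati equation writes \<open>\<Sigma> - W\<close> as \<open>A (\<Sigma> - \<Sigma> C\<^sup>T G\<^sup>-\<^sup>1 C \<Sigma>) A\<^sup>T\<close>, and the bracket is
  positive semidefinite by Cauchy-Schwarz, so \<open>\<Sigma> \<succeq> W \<succeq> \<lambda>\<^sub>n(W) I\<close>. As \<open>C\<close> and \<open>V\<close> are
  diagonal, \<open>C\<^sup>T V\<^sup>-\<^sup>1 C + \<Sigma>\<^sup>-\<^sup>1 = D + \<Sigma>\<^sup>-\<^sup>1\<close> with \<open>D = diag (C\<^sub>j\<^sub>j\<^sup>2 / V\<^sub>j\<^sub>j)\<close>. The diagonal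
  entries of the inverse of a positive definite \<open>M\<close> lie between \<open>1 / M\<^sub>i\<^sub>i\<close> and \<open>1 / d\<close>
  whenever \<open>M \<succeq> d e\<^sub>i e\<^sub>i\<^sup>T\<close>; summing gives
  \<open>n / (D\<^sub>u\<^sub>u + 1/\<lambda>\<^sub>n(W)) \<le> tr (D + \<Sigma>\<^sup>-\<^sup>1)\<^sup>-\<^sup>1 \<le> n / D\<^sub>l\<^sub>l\<close>. Finally \<open>K\<^sub>\<delta> \<in> [1, 9/2]\<close> for
  \<open>\<delta> \<in> [10\<^sup>-\<^sup>5, 10\<^sup>-\<^sup>1]\<close>, and on that range the window for \<open>\<epsilon>\<^sub>i\<close> forces
  \<open>\<Delta>\<^sub>i \<eta>\<^sub>3 \<le> \<sigma>\<^sub>i \<le> \<Delta>\<^sub>i \<eta>\<^sub>4\<close>, which turns the two bounds into \<open>B\<^sub>l\<close> and \<open>B\<^sub>u\<close>.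
\<close>

section \<open>Positive definite matrices\<close>

lemma quadratic_nonneg_discriminant:
  fixes a b c :: real
  assumes nonneg: "\<And>t. 0 \<le> a + 2*t*b + t\<^sup>2*c" and "0 \<le> c"
  shows "b\<^sup>2 \<le> a*c"
proof (cases "c = 0")
  case True
  have "0 \<le> a + 2*(-(a+1)/(2*b))*b" using nonneg[of "-(a+1)/(2*b)"] True by simp
  then have "b = 0" by (cases "b = 0") (simp_all add: field_simps)
  then show ?thesis using True by simp
next
  case False
  have "0 \<le> a + 2*(-b/c)*b + (-b/c)\<^sup>2*c" by (rule nonneg)
  also have "\<dots> = a - b\<^sup>2/c" using False by (simp add: field_simps power2_eq_square)
  finally show ?thesis using False \<open>0 \<le> c\<close> by (simp add: field_simps)
qed

lemma inner_matrix_vector_transpose: "(x::real^'n) \<bullet> (A *v y) = (transpose A *v x) \<bullet> y"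
  by (metis dot_lmul_matrix transpose_matrix_vector)

lemma inner_matrix_vector_sym:
  "transpose M = M \<Longrightarrow> (x::real^'n) \<bullet> (M *v y) = y \<bullet> (M *v x)"
  by (metis inner_matrix_vector_transpose inner_commute)

lemma pos_def_sym: "pos_def M \<Longrightarrow> transpose M = M"
  and pos_semidef_sym: "pos_semidef M \<Longrightarrow> transpose M = M"
  by (simp_all add: pos_def_def pos_semidef_def sym_mat_def)

lemma pos_semidef_nonneg: "pos_semidef M \<Longrightarrow> 0 \<le> x \<bullet> (M *v x)"
  by (simp add: pos_semidef_def)

lemma pos_def_pos: "pos_def M \<Longrightarrow> x \<noteq> 0 \<Longrightarrow> 0 < x \<bullet> (M *v x)"
  by (simp add: pos_def_def)

lemma pos_def_imp_pos_semidef: "pos_def M \<Longrightarrow> pos_semidef M"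
  unfolding pos_def_def pos_semidef_def by (metis inner_zero_left less_eq_real_def)

lemma pos_def_add_pos_semidef:
  assumes "pos_def A" "pos_semidef B"
  shows "pos_def (A + B)"
  using assms unfolding pos_def_def pos_semidef_def sym_mat_def
  by (auto simp: matrix_vector_mult_add_rdistrib inner_add_right add_pos_nonneg
      transpose_def vec_eq_iff)

lemma pos_def_diag_entry: "pos_def M \<Longrightarrow> M $ i $ i > 0"
  unfolding pos_def_def
  by (metis axis_eq_0_iff cart_eq_inner_axis inner_commute zero_neq_one matrix_vector_mul_component)

lemma psd_cauchy_schwarz:
  assumes "pos_semidef (M::real^'n^'n)"
  shows "(x \<bullet> (M *v y))\<^sup>2 \<le> (x \<bullet> (M *v x)) * (y \<bullet> (M *v y))"
proof (rule quadratic_nonneg_discriminant)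
  fix t :: real
  have "0 \<le> (x + t *\<^sub>R y) \<bullet> (M *v (x + t *\<^sub>R y))"
    using assms by (rule pos_semidef_nonneg)
  also have "\<dots> = x \<bullet> (M *v x) + 2*t*(x \<bullet> (M *v y)) + t\<^sup>2*(y \<bullet> (M *v y))"
    using inner_matrix_vector_sym[OF pos_semidef_sym[OF assms], of x y]
    by (simp add: matrix_vector_right_distrib matrix_vector_mult_scaleR inner_add_left
        inner_add_right power2_eq_square algebra_simps)
  finally show "0 \<le> x \<bullet> (M *v x) + 2*t*(x \<bullet> (M *v y)) + t\<^sup>2*(y \<bullet> (M *v y))" .
qed (use assms pos_semidef_nonneg in blast)

lemma matrix_inv_left_right:
  assumes "invertible (A::real^'n^'n)"
  shows "A ** matrix_inv A = mat 1" "matrix_inv A ** A = mat 1"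
  using someI_ex[OF assms[unfolded invertible_def]] unfolding matrix_inv_def by auto

lemma matrix_inv_unique:
  assumes "(A::real^'n^'n) ** B = mat 1"
  shows "matrix_inv A = B"
proof -
  have "invertible A" using assms invertible_right_inverse by blast
  then have "matrix_inv A = (matrix_inv A ** A) ** B"
    using assms by (simp add: matrix_mul_rid flip: matrix_mul_assoc)
  then show ?thesis using matrix_inv_left_right(2)[OF \<open>invertible A\<close>] by simp
qed

lemma matrix_vector_mul_matrix_inv:
  assumes "invertible (A::real^'n^'n)"
  shows "A *v (matrix_inv A *v x) = x"
  using matrix_inv_left_right[OF assms] by (simp add: matrix_vector_mul_assoc)

lemma matrix_inv_sym:
  assumes "transpose M = (M::real^'n^'n)" "invertible M"
  shows "transpose (matrix_inv M) = matrix_inv M"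
proof -
  have "M ** transpose (matrix_inv M) = mat 1"
    using matrix_inv_left_right(2)[OF assms(2)] assms(1)
    by (metis matrix_transpose_mul transpose_mat)
  then show ?thesis using matrix_inv_unique by metis
qed

lemma pos_def_invertible:
  assumes "pos_def (M::real^'n^'n)"
  shows "invertible M"
  using pos_def_pos[OF assms] matrix_left_invertible_ker invertible_left_inverse
  by (metis inner_zero_right less_irrefl)

lemma pos_def_matrix_inv:
  assumes "pos_def (M::real^'n^'n)"
  shows "pos_def (matrix_inv M)"
  unfolding pos_def_def sym_mat_def
proof (intro conjI allI impI)
  show "transpose (matrix_inv M) = matrix_inv M"
    using matrix_inv_sym pos_def_sym pos_def_invertible assms by blast
  fix x :: "real^'n" assume "x \<noteq> 0"
  define y where "y = matrix_inv M *v x"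
  have My: "M *v y = x" unfolding y_def by (rule matrix_vector_mul_matrix_inv[OF pos_def_invertible[OF assms]])
  then have "y \<noteq> 0" using \<open>x \<noteq> 0\<close> by auto
  then show "0 < x \<bullet> (matrix_inv M *v x)"
    using pos_def_pos[OF assms] My by (metis y_def inner_commute)
qed

lemma matrix_vector_mult_axis_component: "((M::real^'n^'n) *v axis j 1) $ i = M $ i $ j"
  by (simp add: matrix_vector_mult_def axis_def if_distrib cong: if_cong)

lemma inner_matrix_vector_axis: "axis i 1 \<bullet> ((M::real^'n^'n) *v axis i 1) = M $ i $ i"
  by (metis cart_eq_inner_axis inner_commute matrix_vector_mult_axis_component)

lemma le_inverse_if_mult_square_le:
  fixes d t :: real
  assumes "d > 0" "d * t\<^sup>2 \<le> t"
  shows "t \<le> 1/d"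
proof (cases "t \<le> 0")
  case True
  then show ?thesis using assms(1) by (meson divide_pos_pos order_trans less_imp_le zero_less_one)
next
  case False
  then have "d * t \<le> 1" using assms(2) by (simp add: power2_eq_square mult.assoc)
  then show ?thesis using assms(1) by (simp add: field_simps mult.commute)
qed

text \<open>Both bounds test the quadratic form of \<open>M\<close> on \<open>y = M\<^sup>-\<^sup>1 e\<^sub>i\<close>, for which
  \<open>y \<bullet> M y = y\<^sub>i = (M\<^sup>-\<^sup>1)\<^sub>i\<^sub>i\<close>.\<close>

lemma matrix_inv_diag_le:
  assumes inv: "invertible (M::real^'n^'n)" and "d > 0"
    and lower: "\<And>y. d * (y $ i)\<^sup>2 \<le> y \<bullet> (M *v y)"
  shows "matrix_inv M $ i $ i \<le> 1/d"
proof -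
  define y where "y = matrix_inv M *v axis i 1"
  have "y \<bullet> (M *v y) = y $ i"
    unfolding y_def matrix_vector_mul_matrix_inv[OF inv] by (simp add: inner_axis)
  then have "d * (y $ i)\<^sup>2 \<le> y $ i" using lower[of y] by simp
  then show ?thesis
    using le_inverse_if_mult_square_le[OF \<open>d > 0\<close>] matrix_vector_mult_axis_component y_def by metis
qed

lemma matrix_inv_diag_ge:
  assumes pd: "pos_def (M::real^'n^'n)"
  shows "1 / M $ i $ i \<le> matrix_inv M $ i $ i"
proof -
  define y where "y = matrix_inv M *v axis i 1"
  have My: "M *v y = axis i 1"
    unfolding y_def by (rule matrix_vector_mul_matrix_inv[OF pos_def_invertible[OF pd]])
  have "(y \<bullet> (M *v axis i 1))\<^sup>2 \<le> (y \<bullet> (M *v y)) * (axis i 1 \<bullet> (M *v axis i 1))"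
    by (rule psd_cauchy_schwarz[OF pos_def_imp_pos_semidef[OF pd]])
  moreover have "y \<bullet> (M *v axis i 1) = 1"
    using inner_matrix_vector_sym[OF pos_def_sym[OF pd], of y "axis i 1"] My by (simp add: inner_axis)
  ultimately have "1 \<le> y $ i * M $ i $ i" using My by (simp add: inner_axis inner_matrix_vector_axis)
  moreover have "y $ i = matrix_inv M $ i $ i"
    unfolding y_def by (rule matrix_vector_mult_axis_component)
  ultimately show ?thesis using pos_def_diag_entry[OF pd, of i] by (simp add: field_simps)
qed

lemma sym_eigenvectors_orthogonal:
  assumes sym: "transpose (W::real^'n^'n) = W"
    and "W *v v = l *s v" "W *v w = l' *s w" "l \<noteq> l'"
  shows "v \<bullet> w = 0"
proof -
  have "l' * (v \<bullet> w) = l * (v \<bullet> w)"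
    using inner_matrix_vector_sym[OF sym, of v w] assms(2,3)
    by (simp add: scalar_mult_eq_scaleR inner_commute)
  then show ?thesis using \<open>l \<noteq> l'\<close> by simp
qed

lemma sym_matrix_finite_eigenvalues:
  assumes sym: "transpose (W::real^'n^'n) = W"
  shows "finite {l. \<exists>v. v \<noteq> 0 \<and> W *v v = l *s v}" (is "finite ?E")
proof -
  define ev where "ev l = (SOME v. v \<noteq> 0 \<and> W *v v = l *s v)" for l
  have ev: "ev l \<noteq> 0 \<and> W *v ev l = l *s ev l" if "l \<in> ?E" for l
    using someI_ex[OF that[simplified]] unfolding ev_def .
  have orth: "ev l \<bullet> ev l' = 0" if "l \<in> ?E" "l' \<in> ?E" "l \<noteq> l'" for l l'
    using sym_eigenvectors_orthogonal[OF sym] ev that by blast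
  have "inj_on ev ?E"
  proof (rule inj_onI, rule ccontr)
    fix l l' assume "l \<in> ?E" "l' \<in> ?E" "ev l = ev l'" "l \<noteq> l'"
    then show False using orth[of l l'] ev[of l] by simp
  qed
  moreover have "independent (ev ` ?E)"
  proof (rule pairwise_orthogonal_independent)
    show "pairwise orthogonal (ev ` ?E)"
      unfolding pairwise_def orthogonal_def using orth by fastforce
    show "0 \<notin> ev ` ?E" using ev by fastforce
  qed
  then have "finite (ev ` ?E)" by (rule eucl.finiteI_independent)
  ultimately show ?thesis using finite_imageD by blast
qed

lemma rayleigh_quotient_attains_min:
  fixes W :: "real^'n^'n"
  obtains v where "v \<bullet> v = 1" "\<And>x. (v \<bullet> (W *v v)) * (x \<bullet> x) \<le> x \<bullet> (W *v x)"
proof -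
  define f where "f x = x \<bullet> (W *v x)" for x :: "real^'n"
  have "continuous_on (sphere 0 1) f"
    unfolding f_def by (intro continuous_intros linear_continuous_on matrix_vector_mul_linear)
  moreover have "sphere (0::real^'n) 1 \<noteq> {}"
    using norm_axis_1 by (metis dist_0_norm empty_iff mem_sphere)
  ultimately obtain v where v: "v \<in> sphere 0 1" and vmin: "\<And>y. y \<in> sphere 0 1 \<Longrightarrow> f v \<le> f y"
    using continuous_attains_inf[OF compact_sphere] by blast
  have "f v * (x \<bullet> x) \<le> f x" for x
  proof (cases "x = 0")
    case False
    have "f v \<le> f ((1/norm x) *\<^sub>R x)" using False by (intro vmin) simp
    also have "\<dots> = f x / (norm x)\<^sup>2"
      unfolding f_def by (simp add: matrix_vector_mult_scaleR power2_eq_square)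
    finally show ?thesis using False by (simp add: field_simps power2_norm_eq_inner)
  qed (simp add: f_def)
  moreover have "v \<bullet> v = 1" using v by (simp flip: power2_norm_eq_inner)
  ultimately show ?thesis using that unfolding f_def by blast
qed

text \<open>The shifted matrix \<open>W - m I\<close> is positive semidefinite and vanishes on \<open>v\<close>, so by
  Cauchy-Schwarz it annihilates \<open>v\<close>.\<close>
lemma rayleigh_minimizer_eigenvector:
  fixes W :: "real^'n^'n" and v :: "real^'n"
  defines "m \<equiv> v \<bullet> (W *v v)"
  assumes sym: "transpose W = W" and "v \<bullet> v = 1"
    and min: "\<And>x. m * (x \<bullet> x) \<le> x \<bullet> (W *v x)"
  shows "W *v v = m *s v"
proof -
  define B where "B = W - mat m"
  have B: "B *v x = W *v x - m *\<^sub>R x" for x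
  proof -
    have "mat m *v x = m *\<^sub>R x"
      unfolding matrix_vector_mult_def mat_def
      by (simp add: vec_eq_iff if_distrib[where f="\<lambda>a. a * b" for b] cong: if_cong)
    then show ?thesis by (simp add: B_def matrix_vector_mult_diff_rdistrib)
  qed
  have "transpose B = B"
    unfolding B_def using sym by (simp add: transpose_def mat_def vec_eq_iff)
  then have "pos_semidef B"
    unfolding pos_semidef_def sym_mat_def using min by (simp add: B inner_diff_right)
  moreover have "v \<bullet> (B *v v) = 0" using \<open>v \<bullet> v = 1\<close> by (simp add: B inner_diff_right m_def)
  ultimately have "v \<bullet> (B *v w) = 0" for w using psd_cauchy_schwarz[of B v w] by simp
  then have "B *v v = 0"
    using inner_matrix_vector_sym[OF pos_semidef_sym[OF \<open>pos_semidef B\<close>]] inner_eq_zero_iff by metis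
  then show ?thesis by (simp add: B scalar_mult_eq_scaleR)
qed

lemma min_eig_pos_def:
  assumes pd: "pos_def (W::real^'n^'n)"
  shows "0 < min_eig W" "min_eig W * (x \<bullet> x) \<le> x \<bullet> (W *v x)"
proof -
  obtain v where v: "v \<bullet> v = 1" and min: "\<And>x. (v \<bullet> (W *v v)) * (x \<bullet> x) \<le> x \<bullet> (W *v x)"
    using rayleigh_quotient_attains_min[of W] by metis
  define m where "m = v \<bullet> (W *v v)"
  have "v \<noteq> 0" using v by auto
  have eig: "W *v v = m *s v"
    unfolding m_def by (rule rayleigh_minimizer_eigenvector[OF pos_def_sym[OF pd] v min])
  have "m \<le> l" if "w \<noteq> 0" "W *v w = l *s w" for l w
  proof -
    have "m * (w \<bullet> w) \<le> l * (w \<bullet> w)" using min[of w] that(2) by (simp add: m_def scalar_mult_eq_scaleR)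
    then show ?thesis using that(1) by simp
  qed
  then have "min_eig W = m"
    unfolding min_eig_def using sym_matrix_finite_eigenvalues[OF pos_def_sym[OF pd]] eig \<open>v \<noteq> 0\<close>
    by (intro Min_eqI) auto
  then show "0 < min_eig W" "min_eig W * (x \<bullet> x) \<le> x \<bullet> (W *v x)"
    using pos_def_pos[OF pd \<open>v \<noteq> 0\<close>] min[of x] by (simp_all add: m_def)
qed

section \<open>The Riccati fixed point\<close>

text \<open>Writing \<open>u = G\<^sup>-\<^sup>1 C \<Sigma> w\<close>, the gain term equals \<open>s = u \<bullet> G u \<ge> (C\<^sup>T u) \<bullet> \<Sigma> (C\<^sup>T u)\<close>,
  and Cauchy-Schwarz for \<open>\<Sigma>\<close> gives \<open>s\<^sup>2 \<le> (w \<bullet> \<Sigma> w) s\<close>.\<close>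
lemma riccati_gain_term_le:
  fixes \<Sigma> C V :: "real^'n^'n"
  defines "G \<equiv> C ** \<Sigma> ** transpose C + V"
  assumes \<Sigma>: "pos_semidef \<Sigma>" and V: "pos_def V"
  shows "w \<bullet> ((\<Sigma> ** transpose C ** matrix_inv G ** C ** \<Sigma>) *v w) \<le> w \<bullet> (\<Sigma> *v w)"
proof -
  have G_form: "x \<bullet> (G *v x) = (transpose C *v x) \<bullet> (\<Sigma> *v (transpose C *v x)) + x \<bullet> (V *v x)" for x
    by (simp add: G_def matrix_vector_mult_add_rdistrib inner_add_right inner_matrix_vector_transpose
        flip: matrix_vector_mul_assoc)
  have "pos_def G"
    unfolding pos_def_def sym_mat_def
  proof (intro conjI allI impI)
    show "transpose G = G"
    proof -
      have "transpose (C ** \<Sigma> ** transpose C) = C ** \<Sigma> ** transpose C"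
        using pos_semidef_sym[OF \<Sigma>] by (simp add: matrix_transpose_mul matrix_mul_assoc)
      then show ?thesis
        using pos_def_sym[OF V] unfolding G_def by (simp add: transpose_def vec_eq_iff)
    qed
    show "0 < x \<bullet> (G *v x)" if "x \<noteq> 0" for x
      using G_form[of x] pos_semidef_nonneg[OF \<Sigma>, of "transpose C *v x"] pos_def_pos[OF V that]
      by linarith
  qed
  define u where "u = matrix_inv G *v (C *v (\<Sigma> *v w))"
  define s where "s = (transpose C *v u) \<bullet> (\<Sigma> *v w)"
  have Gu: "G *v u = C *v (\<Sigma> *v w)"
    unfolding u_def by (rule matrix_vector_mul_matrix_inv[OF pos_def_invertible[OF \<open>pos_def G\<close>]])
  have lhs: "w \<bullet> ((\<Sigma> ** transpose C ** matrix_inv G ** C ** \<Sigma>) *v w) = s"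
    unfolding s_def u_def
    by (simp add: inner_matrix_vector_transpose pos_semidef_sym[OF \<Sigma>] inner_commute
        flip: matrix_vector_mul_assoc)
  have s_G: "s = u \<bullet> (G *v u)"
    unfolding s_def Gu by (simp add: inner_matrix_vector_transpose)
  then have "0 \<le> s"
    using pos_def_imp_pos_semidef[OF \<open>pos_def G\<close>] pos_semidef_nonneg by blast
  have "s\<^sup>2 \<le> (w \<bullet> (\<Sigma> *v w)) * ((transpose C *v u) \<bullet> (\<Sigma> *v (transpose C *v u)))"
    using psd_cauchy_schwarz[OF \<Sigma>, of w "transpose C *v u"]
    unfolding s_def by (simp add: inner_matrix_vector_sym[OF pos_semidef_sym[OF \<Sigma>]])
  also have "\<dots> \<le> (w \<bullet> (\<Sigma> *v w)) * s"
    using G_form[of u] s_G pos_def_imp_pos_semidef[OF V] pos_semidef_nonneg[OF \<Sigma>]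
    by (intro mult_left_mono) (auto simp: pos_semidef_def)
  finally have "s * s \<le> (w \<bullet> (\<Sigma> *v w)) * s" by (simp add: power2_eq_square)
  then have "s \<le> w \<bullet> (\<Sigma> *v w)"
    using \<open>0 \<le> s\<close> pos_semidef_nonneg[OF \<Sigma>] by (cases "s = 0") (auto simp: mult_le_cancel_right)
  then show ?thesis unfolding lhs .
qed

lemma riccati_solution_ge:
  fixes A C V W \<Sigma> :: "real^'n^'n"
  assumes \<Sigma>: "pos_semidef \<Sigma>" and V: "pos_def V"
    and riccati: "\<Sigma> = A ** \<Sigma> ** transpose A
        - A ** \<Sigma> ** transpose C ** matrix_inv (C ** \<Sigma> ** transpose C + V) ** C ** \<Sigma> ** transpose A + W"
  shows "x \<bullet> (W *v x) \<le> x \<bullet> (\<Sigma> *v x)"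
proof -
  let ?K = "\<Sigma> ** transpose C ** matrix_inv (C ** \<Sigma> ** transpose C + V) ** C ** \<Sigma>"
  have "x \<bullet> (\<Sigma> *v x) = (transpose A *v x) \<bullet> (\<Sigma> *v (transpose A *v x))
      - (transpose A *v x) \<bullet> (?K *v (transpose A *v x)) + x \<bullet> (W *v x)"
    by (subst riccati) (simp add: matrix_vector_mult_add_rdistrib matrix_vector_mult_diff_rdistrib
        inner_add_right inner_diff_right inner_matrix_vector_transpose matrix_mul_assoc
        flip: matrix_vector_mul_assoc)
  then show ?thesis using riccati_gain_term_le[OF \<Sigma> V, of "transpose A *v x" C] by simp
qed

lemma riccati_solution_pos_def:
  fixes A C V W \<Sigma> :: "real^'n^'n"
  assumes \<Sigma>: "pos_semidef \<Sigma>" and V: "pos_def V" and W: "pos_def W"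
    and riccati: "\<Sigma> = A ** \<Sigma> ** transpose A
        - A ** \<Sigma> ** transpose C ** matrix_inv (C ** \<Sigma> ** transpose C + V) ** C ** \<Sigma> ** transpose A + W"
  shows "pos_def \<Sigma>" and "min_eig W * (x \<bullet> x) \<le> x \<bullet> (\<Sigma> *v x)"
proof -
  have W_le: "y \<bullet> (W *v y) \<le> y \<bullet> (\<Sigma> *v y)" for y by (rule riccati_solution_ge[OF \<Sigma> V riccati])
  show "pos_def \<Sigma>"
    using pos_semidef_sym[OF \<Sigma>] pos_def_pos[OF W] W_le
    unfolding pos_def_def sym_mat_def by (meson less_le_trans)
  show "min_eig W * (x \<bullet> x) \<le> x \<bullet> (\<Sigma> *v x)"
    using min_eig_pos_def(2)[OF W] W_le order_trans by blast
qed

section \<open>The information matrix\<close>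

definition diag_matrix :: "('n \<Rightarrow> real) \<Rightarrow> real^'n^'n" where
  "diag_matrix d = (\<chi> i j. if i = j then d i else 0)"

lemma diag_mat_eq_diag_matrix: "diag_mat M \<Longrightarrow> M = diag_matrix (\<lambda>i. M $ i $ i)"
  by (auto simp: diag_mat_def diag_matrix_def vec_eq_iff)

lemma transpose_diag_matrix: "transpose (diag_matrix d) = diag_matrix d"
  by (simp add: transpose_def diag_matrix_def vec_eq_iff)

lemma diag_matrix_mult: "diag_matrix d ** diag_matrix e = diag_matrix (\<lambda>i. d i * e i)"
  unfolding diag_matrix_def matrix_matrix_mult_def
  by (simp add: vec_eq_iff if_distrib[where f="\<lambda>a. a * b" for b] cong: if_cong)

lemma diag_matrix_one: "diag_matrix (\<lambda>_. 1) = mat 1"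
  by (simp add: mat_def diag_matrix_def)

lemma inner_diag_matrix: "x \<bullet> (diag_matrix d *v x) = (\<Sum>i\<in>UNIV. d i * (x $ i)\<^sup>2)"
  unfolding diag_matrix_def matrix_vector_mult_def
  by (simp add: inner_vec_def if_distrib[where f="\<lambda>a. b * a" for b] power2_eq_square
      mult.commute mult.left_commute cong: if_cong)

lemma matrix_inv_diag_matrix:
  "(\<And>i. d i \<noteq> 0) \<Longrightarrow> matrix_inv (diag_matrix d) = diag_matrix (\<lambda>i. 1 / d i)"
  by (intro matrix_inv_unique) (simp add: diag_matrix_mult diag_matrix_one)

lemma pos_def_diag_matrix:
  fixes d :: "'n::finite \<Rightarrow> real"
  assumes "\<And>i. d i > 0"
  shows "pos_def (diag_matrix d)"
  unfolding pos_def_def sym_mat_def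
proof (intro conjI allI impI)
  fix x :: "real^'n" assume "x \<noteq> 0"
  then obtain k where "x $ k \<noteq> 0" by (metis vec_eq_iff zero_index)
  then show "0 < x \<bullet> (diag_matrix d *v x)"
    unfolding inner_diag_matrix using assms
    by (intro sum_pos2[of UNIV k]) (auto simp: less_imp_le)
qed (rule transpose_diag_matrix)

lemma diag_matrix_sandwich_inv:
  assumes "\<And>i. v i \<noteq> 0"
  shows "transpose (diag_matrix c) ** matrix_inv (diag_matrix v) ** diag_matrix c
    = diag_matrix (\<lambda>i. (c i)\<^sup>2 / v i)"
  by (simp add: transpose_diag_matrix matrix_inv_diag_matrix[OF assms] diag_matrix_mult
      power2_eq_square)

lemma component_square_le_inner: "((x::real^'n) $ i)\<^sup>2 \<le> x \<bullet> x"
  by (metis abs_ge_zero component_le_norm_cart power2_abs power2_norm_eq_inner power_mono)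

lemma trace_matrix_inv_diag_plus_inv:
  fixes S :: "real^'n^'n" and d :: "'n \<Rightarrow> real"
  assumes S: "pos_def S" and "0 < lam" and S_lower: "\<And>x. lam * (x \<bullet> x) \<le> x \<bullet> (S *v x)"
    and "0 < dl" and d_bounds: "\<And>j. dl \<le> d j" "\<And>j. d j \<le> du"
  shows "real CARD('n) / (du + 1/lam) \<le> trace (matrix_inv (diag_matrix d + matrix_inv S))"
    and "trace (matrix_inv (diag_matrix d + matrix_inv S)) \<le> real CARD('n) / dl"
proof -
  define M where "M = diag_matrix d + matrix_inv S"
  have d_pos: "0 < d j" for j using d_bounds(1)[of j] \<open>0 < dl\<close> by linarith
  then have d_nonneg: "0 \<le> d j" for j by (simp add: less_imp_le)
  have D: "pos_def (diag_matrix d)" by (rule pos_def_diag_matrix[OF d_pos])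
  have S_inv: "pos_semidef (matrix_inv S)"
    by (rule pos_def_imp_pos_semidef[OF pos_def_matrix_inv[OF S]])
  have M: "pos_def M" unfolding M_def by (rule pos_def_add_pos_semidef[OF D S_inv])
  have upper: "matrix_inv M $ i $ i \<le> 1/dl" for i
  proof (rule matrix_inv_diag_le[OF pos_def_invertible[OF M] \<open>0 < dl\<close>])
    fix y :: "real^'n"
    have "dl * (y $ i)\<^sup>2 \<le> d i * (y $ i)\<^sup>2" by (simp add: d_bounds(1) mult_right_mono)
    also have "\<dots> \<le> y \<bullet> (diag_matrix d *v y)"
      unfolding inner_diag_matrix using d_nonneg by (intro member_le_sum) simp_all
    also have "\<dots> \<le> y \<bullet> (M *v y)"
      using pos_semidef_nonneg[OF S_inv, of y]
      by (simp add: M_def matrix_vector_mult_add_rdistrib inner_add_right)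
    finally show "dl * (y $ i)\<^sup>2 \<le> y \<bullet> (M *v y)" .
  qed
  then show "trace (matrix_inv M) \<le> real CARD('n) / dl"
    unfolding trace_def using sum_bounded_above[of UNIV _ "1/dl", OF upper] by simp
  have lower: "1 / (du + 1/lam) \<le> matrix_inv M $ i $ i" for i
  proof -
    have "matrix_inv S $ i $ i \<le> 1/lam"
    proof (rule matrix_inv_diag_le[OF pos_def_invertible[OF S] \<open>0 < lam\<close>])
      fix y :: "real^'n"
      have "lam * (y $ i)\<^sup>2 \<le> lam * (y \<bullet> y)"
        using component_square_le_inner \<open>0 < lam\<close> by (simp add: mult_left_mono)
      then show "lam * (y $ i)\<^sup>2 \<le> y \<bullet> (S *v y)" using S_lower[of y] by linarith
    qed
    then have "M $ i $ i \<le> du + 1/lam"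
      using d_bounds(2)[of i] by (simp add: M_def diag_matrix_def)
    then have "1 / (du + 1/lam) \<le> 1 / M $ i $ i"
      using pos_def_diag_entry[OF M, of i] by (simp add: frac_le)
    also have "\<dots> \<le> matrix_inv M $ i $ i" by (rule matrix_inv_diag_ge[OF M])
    finally show ?thesis .
  qed
  then show "real CARD('n) / (du + 1/lam) \<le> trace (matrix_inv M)"
    unfolding trace_def using sum_bounded_below[of UNIV "1 / (du + 1/lam)", OF lower] by simp
qed

lemma trace_posterior_covariance_bounds:
  fixes A C V W \<Sigma> :: "real^'n^'n"
  defines "d \<equiv> \<lambda>j. (C $ j $ j)\<^sup>2 / (V $ j $ j)"
  assumes W: "pos_def W" and C: "diag_mat C" "pos_def C" and V: "diag_mat V" "pos_def V"
    and \<Sigma>: "pos_semidef \<Sigma>"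
    and riccati: "\<Sigma> = A ** \<Sigma> ** transpose A
        - A ** \<Sigma> ** transpose C ** matrix_inv (C ** \<Sigma> ** transpose C + V) ** C ** \<Sigma> ** transpose A + W"
    and d_range: "\<And>j. d l \<le> d j" "\<And>j. d j \<le> d u"
  shows "real CARD('n) / (d u + 1 / min_eig W)
      \<le> trace (matrix_inv (transpose C ** matrix_inv V ** C + matrix_inv \<Sigma>))" (is ?lower)
    and "trace (matrix_inv (transpose C ** matrix_inv V ** C + matrix_inv \<Sigma>)) \<le> real CARD('n) / d l"
      (is ?upper)
proof -
  have "transpose C ** matrix_inv V ** C = diag_matrix d"
    using diag_matrix_sandwich_inv[of "\<lambda>j. V $ j $ j" "\<lambda>j. C $ j $ j"]
      pos_def_diag_entry[OF V(2), THEN less_imp_neq, THEN not_sym]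
    unfolding d_def by (simp flip: diag_mat_eq_diag_matrix[OF C(1)] diag_mat_eq_diag_matrix[OF V(1)])
  moreover have "0 < d l"
    using pos_def_diag_entry[OF C(2), of l] pos_def_diag_entry[OF V(2), of l] by (simp add: d_def)
  ultimately show ?lower ?upper
    using trace_matrix_inv_diag_plus_inv[OF riccati_solution_pos_def(1)[OF \<Sigma> V(2) W riccati]
        min_eig_pos_def(1)[OF W] riccati_solution_pos_def(2)[OF \<Sigma> V(2) W riccati] \<open>0 < d l\<close> d_range]
    by simp_all
qed

section \<open>The Gaussian mechanism\<close>

definition gauss_kernel :: "real \<Rightarrow> real" where
  "gauss_kernel z = exp (- (z\<^sup>2) / 2)"

lemma Qfun_eq_integral: "Qfun y = integral {y..} gauss_kernel / sqrt (2 * pi)"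
  unfolding Qfun_def gauss_kernel_def by simp

lemma continuous_on_gauss_kernel: "continuous_on S gauss_kernel"
  unfolding gauss_kernel_def by (intro continuous_intros) simp

lemma gauss_kernel_le_exp: "gauss_kernel x \<le> exp (a\<^sup>2 / 2) * exp (- a * x)"
proof -
  have "- (x\<^sup>2) / 2 \<le> a\<^sup>2 / 2 + - a * x"
    using zero_le_power2[of "x - a"] by (simp add: power2_eq_square algebra_simps)
  then show ?thesis unfolding gauss_kernel_def by (simp flip: exp_add)
qed

lemma gauss_kernel_integrable_on_atLeast: "gauss_kernel integrable_on {a..}"
proof (rule measurable_bounded_by_integrable_imp_integrable)
  have "{a..} \<in> sets lebesgue" by simp
  then show "gauss_kernel \<in> borel_measurable (lebesgue_on {a..})"
    by (rule continuous_imp_measurable_on_sets_lebesgue[OF continuous_on_gauss_kernel])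
  show "(\<lambda>x. exp (1/2) * exp (- 1 * x)) integrable_on {a..}"
    using integrable_on_cmult_left[OF integrable_on_exp_minus_to_infinity[of 1 a]] by simp
  show "norm (gauss_kernel x) \<le> exp (1/2) * exp (- 1 * x)" for x
    using gauss_kernel_le_exp[of x 1] by (simp add: gauss_kernel_def)
qed simp

lemma gauss_kernel_integral_split:
  assumes "a \<le> b"
  shows "integral {a..} gauss_kernel = integral {a..b} gauss_kernel + integral {b..} gauss_kernel"
proof -
  have "(gauss_kernel has_integral (integral {a..b} gauss_kernel + integral {b..} gauss_kernel))
      ({a..b} \<union> {b..})"
    by (intro has_integral_Un integrable_integral gauss_kernel_integrable_on_atLeast
        integrable_continuous_interval continuous_on_gauss_kernel)
      (rule negligible_subset[OF negligible_sing[of b]], auto)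
  moreover have "{a..b} \<union> {b..} = {a..}" using assms by auto
  ultimately show ?thesis by (metis integral_unique)
qed

lemma gauss_kernel_integral_interval_pos:
  assumes "a < b"
  shows "0 < integral {a..b} gauss_kernel"
proof -
  define k where "k = exp (- (a\<^sup>2 + b\<^sup>2) / 2)"
  have "integral {a..b} (\<lambda>x. k) \<le> integral {a..b} gauss_kernel"
  proof (rule integral_le)
    show "gauss_kernel integrable_on {a..b}"
      by (intro integrable_continuous_interval continuous_on_gauss_kernel)
    fix x assume x: "x \<in> {a..b}"
    have "x\<^sup>2 \<le> a\<^sup>2 + b\<^sup>2"
    proof (cases "x \<ge> 0")
      case True
      then have "x\<^sup>2 \<le> b\<^sup>2" using x by (simp add: power_mono)
      then show ?thesis by (simp add: add_increasing)
    next
      case False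
      then have "(-x)\<^sup>2 \<le> (-a)\<^sup>2" using x by (intro power_mono) auto
      then show ?thesis by (simp add: add_increasing2)
    qed
    then show "k \<le> gauss_kernel x" unfolding k_def gauss_kernel_def by simp
  qed (rule integrable_const_ivl)
  moreover have "0 < (b - a) * k" using assms by (simp add: k_def)
  ultimately show ?thesis using assms by simp
qed

lemma Qfun_strict_antimono: "y < y' \<Longrightarrow> Qfun y' < Qfun y"
  using gauss_kernel_integral_split[of y y'] gauss_kernel_integral_interval_pos[of y y']
  by (simp add: Qfun_eq_integral divide_strict_right_mono)

lemma continuous_on_Qfun: "continuous_on {a..b} Qfun"
proof -
  have "continuous_on {a..b}
      (\<lambda>y. (integral {a..} gauss_kernel - integral {a..y} gauss_kernel) / sqrt (2 * pi))"
    by (intro continuous_intros indefinite_integral_continuous_1 integrable_continuous_interval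
        continuous_on_gauss_kernel) simp
  moreover have "Qfun y = (integral {a..} gauss_kernel - integral {a..y} gauss_kernel) / sqrt (2 * pi)"
    if "y \<in> {a..b}" for y
    using gauss_kernel_integral_split[of a y] that by (simp add: Qfun_eq_integral)
  ultimately show ?thesis using continuous_on_cong by (metis (no_types, lifting))
qed

lemma sqrt_2pi_bounds: "12/5 < sqrt (2 * pi)" "sqrt (2 * pi) < 13/5"
proof -
  have "(12/5)\<^sup>2 < 2 * pi" using pi_gt3 by (simp add: power2_eq_square)
  then show "12/5 < sqrt (2 * pi)" by (rule real_less_rsqrt)
  have "2 * pi < (13/5)\<^sup>2" using pi_approx(2) by (simp add: power2_eq_square)
  then have "sqrt (2 * pi) < sqrt ((13/5)\<^sup>2)" by (rule real_sqrt_less_mono)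
  then show "sqrt (2 * pi) < 13/5" by simp
qed

text \<open>On \<open>[1, 2]\<close> the exponent \<open>-x\<^sup>2/2\<close> dominates its chord \<open>1 - 3x/2\<close>.\<close>
lemma gauss_kernel_integral_1_2_ge: "(2/3) * (exp (-1/2) - exp (-2)) \<le> integral {1..2} gauss_kernel"
proof -
  define h where "h x = exp (1 - 3 * x / 2)" for x :: real
  have "((\<lambda>x. - (2/3) * exp (1 - 3 * x / 2)) has_vector_derivative h x) (at x within {1..2})" for x
    unfolding h_def
    by (auto intro!: derivative_eq_intros simp flip: has_real_derivative_iff_has_vector_derivative)
  then have "(h has_integral (- (2/3) * exp (1 - 3 * 2 / 2) - (- (2/3) * exp (1 - 3 * 1 / 2)))) {1..2}"
    by (intro fundamental_theorem_of_calculus) auto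
  then have h_int: "(h has_integral (2/3) * (exp (-1/2) - exp (-2))) {1..2}"
    by (simp add: algebra_simps)
  have "integral {1..2} h \<le> integral {1..2} gauss_kernel"
  proof (rule integral_le)
    show "h integrable_on {1..2}" using h_int by blast
    show "gauss_kernel integrable_on {1..2}"
      by (intro integrable_continuous_interval continuous_on_gauss_kernel)
    fix x :: real assume x: "x \<in> {1..2}"
    have "(x - 1) * (x - 2) \<le> 0" using x by (auto simp: mult_nonneg_nonpos)
    then have "1 - 3 * x / 2 \<le> - (x\<^sup>2) / 2" by (simp add: power2_eq_square algebra_simps)
    then show "h x \<le> gauss_kernel x" unfolding h_def gauss_kernel_def by simp
  qed
  then show ?thesis using integral_unique[OF h_int] by simp
qed

lemma Qfun_1_gt: "1/10 < Qfun 1"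
proof -
  have "0 \<le> integral {2..} gauss_kernel"
    by (intro integral_nonneg gauss_kernel_integrable_on_atLeast) (simp add: gauss_kernel_def)
  then have "(2/3) * (exp (-1/2) - exp (-2)) \<le> integral {1..} gauss_kernel"
    using gauss_kernel_integral_1_2_ge gauss_kernel_integral_split[of 1 2] by simp
  moreover have "(7/8)^4 \<le> exp (-1/2::real)"
  proof -
    have "(7/8)^4 \<le> exp (-1/8::real) ^ 4"
      using exp_ge_add_one_self[of "-1/8::real"] by (intro power_mono) auto
    then show ?thesis by (simp flip: exp_of_nat_mult)
  qed
  moreover have "exp (-2::real) \<le> 4/25"
  proof -
    have "(5/2)^2 \<le> exp (1::real) ^ 2"
      using exp_lower_Taylor_quadratic[of 1] by (intro power_mono) auto
    then have "(5/2)^2 \<le> exp (2::real)" by (simp flip: exp_of_nat_mult)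
    then show ?thesis by (simp add: exp_minus field_simps)
  qed
  ultimately have "(2/3) * ((7/8)^4 - 4/25) \<le> integral {1..} gauss_kernel" by simp
  moreover have "(13/5) / 10 < (2/3) * ((7/8)^4 - 4/25 :: real)" by (simp add: power_divide)
  ultimately show ?thesis
    using sqrt_2pi_bounds by (simp add: Qfun_eq_integral field_simps)
qed

lemma Qfun_9_2_lt: "Qfun (9/2) < 1/10^5"
proof -
  define a :: real where "a = 9/2"
  have "integral {a..} gauss_kernel \<le> integral {a..} (\<lambda>x. exp (a\<^sup>2/2) * exp (- a * x))"
  proof (rule integral_le)
    show "(\<lambda>x. exp (a\<^sup>2/2) * exp (- a * x)) integrable_on {a..}"
      using integrable_on_cmult_left[OF integrable_on_exp_minus_to_infinity[of a a]]
      unfolding a_def by simp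
  qed (use gauss_kernel_le_exp in \<open>simp_all add: gauss_kernel_integrable_on_atLeast\<close>)
  also have "\<dots> = exp (a\<^sup>2/2) * integral {a..} (\<lambda>x. exp (- a * x))"
    by (rule integral_mult_right)
  also have "integral {a..} (\<lambda>x. exp (- a * x)) = exp (- a * a) / a"
    by (rule integral_unique[OF has_integral_exp_minus_to_infinity]) (simp add: a_def)
  also have "exp (a\<^sup>2/2) * (exp (- a * a) / a) = exp (- (81/8)) * (2/9)"
    unfolding a_def by (simp add: power2_eq_square flip: exp_add)
  finally have integral_le: "integral {9/2..} gauss_kernel \<le> exp (- (81/8)) * (2/9)"
    unfolding a_def .
  have "(163/100::real) \<le> 1 + (81/160) + (81/160)\<^sup>2/2" by (simp add: power2_eq_square)
  also have "\<dots> \<le> exp (81/160::real)" by (rule exp_lower_Taylor_quadratic) simp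
  finally have "(163/100)^20 \<le> exp (81/160::real) ^ 20" by (intro power_mono) auto
  then have "9260 \<le> exp (81/8::real)"
    using order_trans[of "9260::real" "(163/100)^20"] by (simp add: power_divide flip: exp_of_nat_mult)
  then have "exp (- (81/8::real)) \<le> 1/9260" by (simp add: exp_minus field_simps)
  then have "integral {9/2..} gauss_kernel < (12/5) / 10^5"
    using integral_le by simp
  then show ?thesis
    using sqrt_2pi_bounds by (simp add: Qfun_eq_integral field_simps)
qed

lemma Kfun_bounds:
  assumes "10 powi (-5) \<le> \<delta>" "\<delta> \<le> 10 powi (-1)"
  shows "1 \<le> Kfun \<delta>" "Kfun \<delta> \<le> 9/2"
proof -
  have "Qfun (9/2) \<le> \<delta>" "\<delta> \<le> Qfun 1"
    using assms Qfun_9_2_lt Qfun_1_gt by (simp_all add: power_int_minus)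
  then have "\<exists>x\<ge>1. x \<le> 9/2 \<and> Qfun x = \<delta>"
    by (intro IVT2'[OF _ _ _ continuous_on_Qfun]) auto
  then obtain x where x: "1 \<le> x" "x \<le> 9/2" "Qfun x = \<delta>" by blast
  have "Kfun \<delta> = x"
    unfolding Kfun_def
  proof (rule the_equality)
    show "y = x" if "Qfun y = \<delta>" for y
      using Qfun_strict_antimono[of x y] Qfun_strict_antimono[of y x] x(3) that
      by (cases y x rule: linorder_cases) auto
  qed (rule x(3))
  then show "1 \<le> Kfun \<delta>" "Kfun \<delta> \<le> 9/2" using x by simp_all
qed

text \<open>The lower bound on \<open>\<epsilon>\<close> implies \<open>1 + 9\<eta> \<le> 2\<epsilon>\<eta>\<^sup>2\<close>, which is what makes
  \<open>(2\<epsilon>\<eta> - K)\<^sup>2 \<ge> K\<^sup>2 + 2\<epsilon>\<close> for every \<open>K \<le> 9/2\<close>.\<close>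
lemma gaussian_noise_scale_le:
  fixes \<eta> K \<epsilon> \<Delta> :: real
  assumes "0 < \<eta>" "K \<le> 9/2" "0 < \<epsilon>" "0 < \<Delta>"
    and \<epsilon>_lower: "1/8 * ((1 + sqrt (36 * \<eta> + 1)) / \<eta>)\<^sup>2 \<le> \<epsilon>"
  shows "\<Delta> / (2 * \<epsilon>) * (K + sqrt (K\<^sup>2 + 2 * \<epsilon>)) \<le> \<Delta> * \<eta>"
proof -
  define s where "s = sqrt (36 * \<eta> + 1)"
  have "1 \<le> s" "s\<^sup>2 = 36 * \<eta> + 1" unfolding s_def using \<open>0 < \<eta>\<close> by simp_all
  then have "4 + 36 * \<eta> \<le> (1 + s)\<^sup>2" by (simp add: power2_eq_square algebra_simps)
  moreover have "(1 + s)\<^sup>2 \<le> 8 * \<epsilon> * \<eta>\<^sup>2"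
    using \<epsilon>_lower \<open>0 < \<eta>\<close> unfolding s_def[symmetric] by (simp add: power_divide field_simps)
  ultimately have key: "1 + 9 * \<eta> \<le> 2 * \<epsilon> * \<eta>\<^sup>2" by simp
  then have "(1 + 9 * \<eta>) / \<eta> \<le> 2 * \<epsilon> * \<eta>"
    using \<open>0 < \<eta>\<close> by (simp add: field_simps power2_eq_square)
  moreover have "(1 + 9 * \<eta>) / \<eta> = 1/\<eta> + 9" "0 < 1/\<eta>"
    using \<open>0 < \<eta>\<close> by (simp_all add: field_simps)
  ultimately have K_le: "K \<le> 2 * \<epsilon> * \<eta>" using \<open>K \<le> 9/2\<close> by linarith
  have "(2 * \<epsilon> * \<eta> - K)\<^sup>2 - (K\<^sup>2 + 2 * \<epsilon>) = 2 * \<epsilon> * (2 * \<epsilon> * \<eta>\<^sup>2 - 2 * \<eta> * K - 1)"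
    by (simp add: power2_eq_square algebra_simps)
  also have "\<dots> \<ge> 2 * \<epsilon> * (\<eta> * (9 - 2 * K))"
    using key \<open>0 < \<epsilon>\<close> by (intro mult_left_mono) (simp_all add: algebra_simps)
  also have "2 * \<epsilon> * (\<eta> * (9 - 2 * K)) \<ge> 0"
    using assms by simp
  finally have "sqrt (K\<^sup>2 + 2 * \<epsilon>) \<le> 2 * \<epsilon> * \<eta> - K"
    using K_le by (intro real_le_lsqrt) auto
  then have "K + sqrt (K\<^sup>2 + 2 * \<epsilon>) \<le> 2 * \<epsilon> * \<eta>" by simp
  then have "\<Delta> / (2 * \<epsilon>) * (K + sqrt (K\<^sup>2 + 2 * \<epsilon>)) \<le> \<Delta> / (2 * \<epsilon>) * (2 * \<epsilon> * \<eta>)"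
    using assms by (intro mult_left_mono) auto
  then show ?thesis using \<open>0 < \<epsilon>\<close> by simp
qed

lemma gaussian_noise_scale_pos:
  fixes K \<epsilon> \<Delta> :: real
  assumes "0 < \<epsilon>" "0 < \<Delta>"
  shows "0 < \<Delta> / (2 * \<epsilon>) * (K + sqrt (K\<^sup>2 + 2 * \<epsilon>))"
proof -
  have "\<bar>K\<bar> < sqrt (K\<^sup>2 + 2 * \<epsilon>)" using assms by (intro real_less_rsqrt) simp
  then show ?thesis using assms by simp
qed

lemma gaussian_noise_scale_ge:
  fixes \<eta> K \<epsilon> \<Delta> :: real
  assumes "0 < \<eta>" "1 \<le> K" "0 < \<epsilon>" "0 < \<Delta>" and \<epsilon>_upper: "\<epsilon> \<le> 1 / \<eta>"
  shows "\<Delta> * \<eta> \<le> \<Delta> / (2 * \<epsilon>) * (K + sqrt (K\<^sup>2 + 2 * \<epsilon>))"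
proof -
  have "K \<le> sqrt (K\<^sup>2 + 2 * \<epsilon>)" using assms by (intro real_le_rsqrt) simp
  then have "\<Delta> / (2 * \<epsilon>) * 2 \<le> \<Delta> / (2 * \<epsilon>) * (K + sqrt (K\<^sup>2 + 2 * \<epsilon>))"
    using assms by (intro mult_left_mono) auto
  moreover have "\<Delta> * \<eta> \<le> \<Delta> / (2 * \<epsilon>) * 2" using assms by (simp add: field_simps)
  ultimately show ?thesis by linarith
qed

lemma n_div_snr_le_of_noise_le:
  fixes n c \<Delta> \<sigma> B :: real
  defines "\<eta> \<equiv> sqrt (B * c\<^sup>2 / (n * \<Delta>\<^sup>2))"
  assumes "0 < n" "0 < \<Delta>" "0 < \<eta>" "0 < \<sigma>" "\<sigma> \<le> \<Delta> * \<eta>" "c \<noteq> 0"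
  shows "n / (c\<^sup>2 / \<sigma>\<^sup>2) \<le> B"
proof -
  have "\<sigma>\<^sup>2 \<le> (\<Delta> * \<eta>)\<^sup>2" using assms by (intro power_mono) auto
  also have "\<dots> = B * c\<^sup>2 / n"
    using assms unfolding \<eta>_def power_mult_distrib by (simp add: field_simps)
  finally show ?thesis using assms by (simp add: field_simps)
qed

lemma le_n_div_snr_of_noise_ge:
  fixes n lam c \<Delta> \<sigma> B :: real
  defines "\<eta> \<equiv> sqrt (B * c\<^sup>2 / (\<Delta>\<^sup>2 * (n - B / lam)))"
  assumes "0 < n" "0 < lam" "0 < \<Delta>" "0 < \<eta>" "\<Delta> * \<eta> \<le> \<sigma>" "c \<noteq> 0"
  shows "B \<le> n / (c\<^sup>2 / \<sigma>\<^sup>2 + 1 / lam)"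
proof -
  have R: "0 < B * c\<^sup>2 / (\<Delta>\<^sup>2 * (n - B / lam))" using \<open>0 < \<eta>\<close> unfolding \<eta>_def by simp
  have "0 < B"
  proof (rule ccontr)
    assume "\<not> 0 < B"
    then have "0 \<le> - B / lam" using \<open>0 < lam\<close> by (simp add: divide_nonpos_pos)
    then have "0 < \<Delta>\<^sup>2 * (n - B / lam)" using \<open>0 < n\<close> \<open>0 < \<Delta>\<close> by simp
    moreover have "B * c\<^sup>2 \<le> 0" using \<open>\<not> 0 < B\<close> by (simp add: mult_nonpos_nonneg)
    ultimately show False using R by (simp add: zero_less_divide_iff)
  qed
  moreover from this have "0 < B * c\<^sup>2" using \<open>c \<noteq> 0\<close> by simp
  then have "0 < \<Delta>\<^sup>2 * (n - B / lam)" using R by (auto simp: zero_less_divide_iff)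
  ultimately have B: "0 < B" "0 < n - B / lam" by (simp_all add: zero_less_mult_iff)
  have "(\<Delta> * \<eta>)\<^sup>2 \<le> \<sigma>\<^sup>2" using assms by (intro power_mono) auto
  moreover have "(\<Delta> * \<eta>)\<^sup>2 = B * c\<^sup>2 / (n - B / lam)"
    using assms B unfolding \<eta>_def power_mult_distrib by (simp add: field_simps)
  ultimately have "B * c\<^sup>2 / (n - B / lam) \<le> \<sigma>\<^sup>2" by simp
  moreover have "0 < \<sigma>" using assms by (meson less_le_trans mult_pos_pos)
  ultimately have "B * c\<^sup>2 / \<sigma>\<^sup>2 \<le> n - B / lam" using B by (simp add: field_simps)
  then have "B * (c\<^sup>2 / \<sigma>\<^sup>2 + 1 / lam) \<le> n" by (simp add: algebra_simps)
  moreover have "0 < c\<^sup>2 / \<sigma>\<^sup>2 + 1 / lam" using \<open>0 < lam\<close> by (simp add: add_nonneg_pos)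
  ultimately show ?thesis by (simp add: pos_le_divide_eq mult.commute)
qed

lemma gaussian_mechanism_upper_calibration:
  fixes n c B \<Delta> \<epsilon> K :: real
  defines "\<eta> \<equiv> sqrt (B * c\<^sup>2 / (n * \<Delta>\<^sup>2))"
    and "\<sigma> \<equiv> \<Delta> / (2 * \<epsilon>) * (K + sqrt (K\<^sup>2 + 2 * \<epsilon>))"
  assumes "0 < n" "0 < \<Delta>" "0 < \<epsilon>" "K \<le> 9/2" "c \<noteq> 0" "0 < \<eta>"
    and "1/8 * ((1 + sqrt (36 * \<eta> + 1)) / \<eta>)\<^sup>2 \<le> \<epsilon>"
  shows "n / (c\<^sup>2 / \<sigma>\<^sup>2) \<le> B"
proof -
  have "0 < \<sigma>" unfolding \<sigma>_def using assms by (intro gaussian_noise_scale_pos)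
  moreover have "\<sigma> \<le> \<Delta> * \<eta>" unfolding \<sigma>_def using assms by (intro gaussian_noise_scale_le)
  ultimately show ?thesis
    using n_div_snr_le_of_noise_le[of n \<Delta> B c \<sigma>] assms unfolding \<eta>_def by blast
qed

lemma gaussian_mechanism_lower_calibration:
  fixes n lam c B \<Delta> \<epsilon> K :: real
  defines "\<eta> \<equiv> sqrt (B * c\<^sup>2 / (\<Delta>\<^sup>2 * (n - B / lam)))"
    and "\<sigma> \<equiv> \<Delta> / (2 * \<epsilon>) * (K + sqrt (K\<^sup>2 + 2 * \<epsilon>))"
  assumes "0 < n" "0 < lam" "0 < \<Delta>" "0 < \<epsilon>" "1 \<le> K" "c \<noteq> 0" "0 < \<eta>" "\<epsilon> \<le> 1 / \<eta>"
  shows "B \<le> n / (c\<^sup>2 / \<sigma>\<^sup>2 + 1 / lam)"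
proof -
  have "\<Delta> * \<eta> \<le> \<sigma>" unfolding \<sigma>_def using assms by (intro gaussian_noise_scale_ge)
  then show ?thesis
    using le_n_div_snr_of_noise_ge[of n lam \<Delta> B c \<sigma>] assms unfolding \<eta>_def by blast
qed

theorem theorem8:
  fixes A W C V \<Sigma> :: "real^'n^'n"
    and owner :: "'n \<Rightarrow> 'm::finite"
    and b \<Delta> \<delta> \<epsilon> \<sigma> :: "'m \<Rightarrow> real"
    and B_l B_u :: real
    and l u :: 'n
  assumes owner_surj: "surj owner"
    and W_pd: "pos_def W"
    and C_diag: "diag_mat C" and C_pd: "pos_def C"
    and b_pos: "\<And>i. b i > 0"
    and \<Delta>_def: "\<And>i. \<Delta> i = l2_sensitivity C owner (b i) i"
    and \<Delta>_pos: "\<And>i. \<Delta> i > 0"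
    and \<delta>_range: "\<And>i. 10 powi (-5) \<le> \<delta> i \<and> \<delta> i \<le> 10 powi (-1)"
    and \<epsilon>_pos: "\<And>i. \<epsilon> i > 0"
    and \<sigma>_def: "\<And>i. \<sigma> i = \<Delta> i / (2 * \<epsilon> i) * (Kfun (\<delta> i) + sqrt ((Kfun (\<delta> i))\<^sup>2 + 2 * \<epsilon> i))"
    and V_def: "V = (\<chi> j k. if j = k then (\<sigma> (owner j))\<^sup>2 else 0)"
    and \<Sigma>_psd: "pos_semidef \<Sigma>"
    and \<Sigma>_riccati: "\<Sigma> = A ** \<Sigma> ** transpose A
        - A ** \<Sigma> ** transpose C ** matrix_inv (C ** \<Sigma> ** transpose C + V) ** C ** \<Sigma> ** transpose A + W"
    and \<Sigma>_unique: "\<And>S. pos_semidef S \<Longrightarrow> S = A ** S ** transpose A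
        - A ** S ** transpose C ** matrix_inv (C ** S ** transpose C + V) ** C ** S ** transpose A + W
        \<Longrightarrow> S = \<Sigma>"
    and l_argmin: "\<And>j. (C $ l $ l)\<^sup>2 / (V $ l $ l) \<le> (C $ j $ j)\<^sup>2 / (V $ j $ j)"
    and u_argmax: "\<And>j. (C $ j $ j)\<^sup>2 / (V $ j $ j) \<le> (C $ u $ u)\<^sup>2 / (V $ u $ u)"
    and \<eta>3_pos: "\<And>i. sqrt (B_l * (C $ u $ u)\<^sup>2 /
                  ((\<Delta> i)\<^sup>2 * (real CARD('n) - B_l / min_eig W))) > 0"
    and \<eta>4_pos: "\<And>i. sqrt (B_u * (C $ l $ l)\<^sup>2 / (real CARD('n) * (\<Delta> i)\<^sup>2)) > 0"
    and \<epsilon>_bounds: "\<And>i.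
        let \<eta>3 = sqrt (B_l * (C $ u $ u)\<^sup>2 / ((\<Delta> i)\<^sup>2 * (real CARD('n) - B_l / min_eig W)));
            \<eta>4 = sqrt (B_u * (C $ l $ l)\<^sup>2 / (real CARD('n) * (\<Delta> i)\<^sup>2))
        in 1/8 * ((1 + sqrt (36 * \<eta>4 + 1)) / \<eta>4)\<^sup>2 \<le> \<epsilon> i \<and> \<epsilon> i \<le> 1 / \<eta>3"
  shows "B_l \<le> trace (matrix_inv (transpose C ** matrix_inv V ** C + matrix_inv \<Sigma>))
       \<and> trace (matrix_inv (transpose C ** matrix_inv V ** C + matrix_inv \<Sigma>)) \<le> B_u"
proof -
  \<comment> \<open>Only positivity of the sensitivities enters.\<close>
  have K: "1 \<le> Kfun (\<delta> i)" "Kfun (\<delta> i) \<le> 9/2" for i using Kfun_bounds \<delta>_range by blast+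
  have "0 < \<sigma> i" for i unfolding \<sigma>_def by (rule gaussian_noise_scale_pos[OF \<epsilon>_pos \<Delta>_pos])
  then have V_pd: "pos_def V"
    unfolding V_def by (fold diag_matrix_def) (intro pos_def_diag_matrix zero_less_power)
  have "diag_mat V" by (simp add: V_def diag_mat_def)
  note trace_bounds = trace_posterior_covariance_bounds[OF W_pd C_diag C_pd \<open>diag_mat V\<close> V_pd \<Sigma>_psd
      \<Sigma>_riccati l_argmin u_argmax]
  have C_ne: "C $ j $ j \<noteq> 0" for j using pos_def_diag_entry[OF C_pd] by (metis less_irrefl)
  have "real CARD('n) / ((C $ l $ l)\<^sup>2 / (V $ l $ l)) \<le> B_u"
    using gaussian_mechanism_upper_calibration[OF _ \<Delta>_pos \<epsilon>_pos K(2) C_ne \<eta>4_pos] \<epsilon>_bounds[of "owner l"]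
    by (simp add: V_def \<sigma>_def Let_def)
  moreover have "B_l \<le> real CARD('n) / ((C $ u $ u)\<^sup>2 / (V $ u $ u) + 1 / min_eig W)"
    using gaussian_mechanism_lower_calibration[OF _ min_eig_pos_def(1)[OF W_pd] \<Delta>_pos \<epsilon>_pos K(1) C_ne
        \<eta>3_pos] \<epsilon>_bounds[of "owner u"]
    by (simp add: V_def \<sigma>_def Let_def)
  ultimately show ?thesis using trace_bounds by linarith
qed

end
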